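(* Let $d,K\in\mathbb{N}$, $\mathbb{T}^d=(\mathbb{R}/\mathbb{Z})^d$, $E:\mathbb{T}^d\to\mathbb{R}^d$ of class $\mathcal{C}^\infty$, and $\sigma_1,\ldots,\sigma_K:\mathbb{T}^d\times\mathbb{R}^d\to\mathbb{R}$ bounded and of class $\mathcal{C}^\infty$. Let $f_0$ be non-random, $\tau\in(0,1)$, $t_n=n\tau$, $\delta\beta_{n,k}=\beta_k(t_{n+1})-\beta_k(t_n)$. Define $f_0^{\rm mI}=f_0$ and for $n\ge0$ $$\hat f_{n+1}^{\rm mI}=S^2(\tau)S^1(\tau)f_n^{\rm mI},\qquad f_{n+1}^{\rm mI}(x,v)=\exp\Big(\sum_{k=1}^K\sigma_k(x,v)\delta\beta_{n,k}-\frac{\tau}{2}\sum_{k=1}^K\sigma_k(x,v)^2\Big)\hat f_{n+1}^{\rm mI}(x,v),$$ where $S^1(\tau)f(x,v)=f(x-\tau v,v)$ and $S^2(\tau)f(x,v)=f(x,v-\tau E(x))$. Then: (i) (Positivity) If $f_0\ge0$ on $\mathbb{T}^d\times\mathbb{R}^d$, then for any $\tau\in(0,1)$, $f_n^{\rm mI}(x,v)\ge0$ almost surely for all $n\ge0$ and all $(x,v)$. (ii) (Expected mass) If $f_0\in L^1_{x,v}$, then almost surely $f_n^{\rm mI}\in L^1_{x,v}$ for all $n\ge0$, and $\iint\mathbb{E}[f_n^{\rm mI}(x,v)]\,\mathrm{d}x\,\mathrm{d}v=\iint f_0(x,v)\,\mathrm{d}x\,\mathrm{d}v$. (iii) ($L^2$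 norm) If $f_0\in L^2_{x,v}$ and there is a real $\sigma$ with $\sum_{k=1}^K\sigma_k(x,v)^2=\sigma^2$ for all $(x,v)$, then $f_n^{\rm mI}\in L^2(\Omega,L^2_{x,v})$ for all $n\ge0$ and $\mathbb{E}[\|f_n^{\rm mI}\|_{L^2_{x,v}}^2]=e^{\sigma^2t_n}\|f_0\|_{L^2_{x,v}}^2$.
   Context: $\beta_1,\ldots,\beta_K$ are independent standard real-valued Wiener processes on a filtered probability space. $L^p_{x,v}=L^p(\mathbb{T}^d\times\mathbb{R}^d)$ for Lebesgue measure; integrals $\iint$ are over $\mathbb{T}^d\times\mathbb{R}^d$. *)

theory Defs
  imports "HOL-Probability.Probability"
begin

text \<open>Functions on the torus T^d are represented as functions on R^d that are
  Z^d-periodic; d is the cardinality of the finite index type 'd.\<close>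

definition int_vec :: "real^'d \<Rightarrow> bool" where
  "int_vec z \<longleftrightarrow> (\<forall>i. z $ i \<in> \<int>)"

definition periodic_torus :: "(real^'d \<Rightarrow> 'b) \<Rightarrow> bool" where
  "periodic_torus g \<longleftrightarrow> (\<forall>x z. int_vec z \<longrightarrow> g (x + z) = g x)"

definition periodic_x :: "((real^'d) \<times> (real^'d) \<Rightarrow> 'b) \<Rightarrow> bool" where
  "periodic_x g \<longleftrightarrow> (\<forall>x v z. int_vec z \<longrightarrow> g (x + z, v) = g (x, v))"

text \<open>Fundamental domain [0,1)^d x R^d of T^d x R^d (Lebesgue measure).\<close>
definition phase_dom :: "((real^'d) \<times> (real^'d)) set" where
  "phase_dom = {x. \<forall>i. 0 \<le> x $ i \<and> x $ i < 1} \<times> UNIV"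

text \<open>C^infinity: D vs is the iterated partial derivative along the basis
  directions listed in vs; every such derivative exists (Frechet) everywhere.\<close>
definition smooth_map :: "('a::euclidean_space \<Rightarrow> 'b::real_normed_vector) \<Rightarrow> bool" where
  "smooth_map f \<longleftrightarrow> (\<exists>D :: 'a list \<Rightarrow> 'a \<Rightarrow> 'b. D [] = f \<and>
     (\<forall>vs x. (D vs has_derivative (\<lambda>h. \<Sum>i\<in>Basis. (h \<bullet> i) *\<^sub>R D (i # vs) x)) (at x)))"

definition indep_wiener :: "'w measure \<Rightarrow> nat \<Rightarrow> (nat \<Rightarrow> real \<Rightarrow> 'w \<Rightarrow> real) \<Rightarrow> bool" where
  "indep_wiener M K \<beta> \<longleftrightarrow> prob_space M \<and>
     (\<forall>k<K. \<forall>t\<ge>0. \<beta> k t \<in> borel_measurable M) \<and>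
     (\<forall>k<K. AE \<omega> in M. \<beta> k 0 \<omega> = 0) \<and>
     (\<forall>k<K. AE \<omega> in M. continuous_on {0..} (\<lambda>t. \<beta> k t \<omega>)) \<and>
     (\<forall>(n::nat) (ts::nat \<Rightarrow> real). 0 \<le> ts 0 \<longrightarrow> (\<forall>i<n. ts i < ts (Suc i)) \<longrightarrow>
        prob_space.indep_vars M (\<lambda>_. borel)
          (\<lambda>(k, i) \<omega>. \<beta> k (ts (Suc i)) \<omega> - \<beta> k (ts i) \<omega>) ({..<K} \<times> {..<n}) \<and>
        (\<forall>k<K. \<forall>i<n. distributed M lborel (\<lambda>\<omega>. \<beta> k (ts (Suc i)) \<omega> - \<beta> k (ts i) \<omega>)
            (\<lambda>y. ennreal (normal_density 0 (sqrt (ts (Suc i) - ts i)) y))))"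

definition S1 :: "real \<Rightarrow> ((real^'d) \<times> (real^'d) \<Rightarrow> real) \<Rightarrow> (real^'d) \<times> (real^'d) \<Rightarrow> real" where
  "S1 \<tau> f = (\<lambda>(x, v). f (x - \<tau> *\<^sub>R v, v))"

definition S2 :: "real \<Rightarrow> (real^'d \<Rightarrow> real^'d) \<Rightarrow> ((real^'d) \<times> (real^'d) \<Rightarrow> real) \<Rightarrow> (real^'d) \<times> (real^'d) \<Rightarrow> real" where
  "S2 \<tau> E f = (\<lambda>(x, v). f (x, v - \<tau> *\<^sub>R E x))"

text \<open>The modified integrator f_n^{mI}; indices k = 0..K-1 stand for 1..K.\<close>
fun fmI :: "real \<Rightarrow> (real^'d \<Rightarrow> real^'d) \<Rightarrow> nat \<Rightarrow> (nat \<Rightarrow> (real^'d) \<times> (real^'d) \<Rightarrow> real)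
     \<Rightarrow> (nat \<Rightarrow> real \<Rightarrow> 'w \<Rightarrow> real) \<Rightarrow> ((real^'d) \<times> (real^'d) \<Rightarrow> real)
     \<Rightarrow> nat \<Rightarrow> 'w \<Rightarrow> (real^'d) \<times> (real^'d) \<Rightarrow> real" where
  "fmI \<tau> E K \<sigma> \<beta> f0 0 \<omega> = f0"
| "fmI \<tau> E K \<sigma> \<beta> f0 (Suc n) \<omega> = (\<lambda>z.
     exp ((\<Sum>k<K. \<sigma> k z * (\<beta> k (real (Suc n) * \<tau>) \<omega> - \<beta> k (real n * \<tau>) \<omega>))
          - \<tau> / 2 * (\<Sum>k<K. (\<sigma> k z)\<^sup>2))
     * S2 \<tau> E (S1 \<tau> (fmI \<tau> E K \<sigma> \<beta> f0 n \<omega>)) z)"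

end

theory Submission
  imports Defs
begin

(*
  Unrolling the recursion gives the closed form
    f_n(z) = f_0(Phi^n z) * prod_{j<n} exp (A_j (Phi^(n-1-j) z)),
  where Phi(x, v) = (x - tau (v - tau E x), v - tau E x) is the backward characteristic of one
  splitting step and A_j = sum_k sigma_k dbeta_{j,k} - tau/2 sum_k sigma_k^2 is the exponent of the
  j-th noise step. Positivity is read off directly. Phi is the composition of two shears, each a
  translation in one variable (in x only modulo Z^d, which is where periodicity enters), so it
  preserves the Lebesgue integral over the fundamental domain of x-periodic functions. The increments
  dbeta_{j,k} are independent N(0, tau) variables, so by the Gaussian moment generating function
  E[(prod_j exp A_j)^m] = exp ((m^2 - m) tau/2 sum_j sum_k sigma_k^2): this is 1 for m = 1, which
  gives conservation of the expected mass, and e^(sigma^2 t_n) for m = 2 when sum_k sigma_k^2 =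
  sigma^2, which gives the L^2 identity after exchanging expectation and integral (Tonelli/Fubini).
*)

lemma measurable_fst_borel[measurable (raw)]:
  "f \<in> M \<rightarrow>\<^sub>M (borel :: ('a::euclidean_space \<times> 'b::euclidean_space) measure) \<Longrightarrow>
    (\<lambda>x. fst (f x)) \<in> borel_measurable M"
  by (rule measurable_compose[where f=f]) (auto intro!: borel_measurable_continuous_onI continuous_on_fst)

lemma measurable_snd_borel[measurable (raw)]:
  "f \<in> M \<rightarrow>\<^sub>M (borel :: ('a::euclidean_space \<times> 'b::euclidean_space) measure) \<Longrightarrow>
    (\<lambda>x. snd (f x)) \<in> borel_measurable M"
  by (rule measurable_compose[where f=f]) (auto intro!: borel_measurable_continuous_onI continuous_on_snd)

lemma borel_measurable_vec_nth[measurable]: "(\<lambda>x::real^'d. x $ i) \<in> borel_measurable borel"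
  by (intro borel_measurable_continuous_onI linear_continuous_on bounded_linear_vec_nth)

lemma borel_measurable_vec_lambda:
  fixes f :: "'a \<Rightarrow> 'd::finite \<Rightarrow> real"
  assumes "\<And>i. (\<lambda>x. f x i) \<in> borel_measurable M"
  shows "(\<lambda>x. \<chi> i. f x i) \<in> borel_measurable M"
  using assms by (subst borel_measurable_euclidean_space) (auto simp: cart_eq_inner_axis[symmetric] Basis_vec_def)

lemma nn_integral_lborel_translate:
  fixes F :: "'a::euclidean_space \<Rightarrow> ennreal"
  assumes [measurable]: "F \<in> borel_measurable borel"
  shows "(\<integral>\<^sup>+x. F (x + a) \<partial>lborel) = (\<integral>\<^sup>+x. F x \<partial>lborel)"
proof -
  have "(\<integral>\<^sup>+x. F x \<partial>lborel) = (\<integral>\<^sup>+x. F x \<partial>distr lborel borel ((+) a))"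
    by (simp add: lborel_distr_plus)
  also have "\<dots> = (\<integral>\<^sup>+x. F (x + a) \<partial>lborel)"
    by (subst nn_integral_distr) (auto simp: add.commute)
  finally show ?thesis ..
qed

lemma
  fixes F :: "'a::euclidean_space \<times> 'b::euclidean_space \<Rightarrow> ennreal"
  assumes "F \<in> borel_measurable borel"
  shows nn_integral_lborel_fst: "(\<integral>\<^sup>+z. F z \<partial>lborel) = (\<integral>\<^sup>+x. \<integral>\<^sup>+v. F (x, v) \<partial>lborel \<partial>lborel)"
    and nn_integral_lborel_snd: "(\<integral>\<^sup>+z. F z \<partial>lborel) = (\<integral>\<^sup>+v. \<integral>\<^sup>+x. F (x, v) \<partial>lborel \<partial>lborel)"
  using lborel.nn_integral_fst[of F lborel] lborel_pair.nn_integral_snd[of F]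
  by (simp_all add: assms lborel_prod)

section \<open>Lebesgue measure on the torus\<close>

definition unit_cube :: "(real^'d) set" where
  "unit_cube = {x. \<forall>i. 0 \<le> x $ i \<and> x $ i < 1}"

lemma unit_cube_sets[measurable]: "unit_cube \<in> sets borel"
  unfolding unit_cube_def by measurable

lemma phase_dom_eq: "phase_dom = unit_cube \<times> UNIV"
  by (simp add: phase_dom_def unit_cube_def)

lemma phase_dom_sets[measurable]: "phase_dom \<in> sets borel"
proof -
  have "phase_dom = {z \<in> space borel. fst z \<in> unit_cube}"
    by (auto simp: phase_dom_eq)
  also have "\<dots> \<in> sets borel" by measurable
  finally show ?thesis .
qed

lemma indicator_phase_dom: "indicator phase_dom (x, v) = indicator unit_cube x"
  by (simp add: phase_dom_eq indicator_def)

definition cube_vertex :: "'d set \<Rightarrow> real^'d" where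
  "cube_vertex S = (\<chi> i. if i \<in> S then 1 else 0)"

lemma int_vec_cube_vertex: "int_vec (cube_vertex S)"
  by (simp add: int_vec_def cube_vertex_def)

definition cube_piece :: "real^'d \<Rightarrow> 'd set \<Rightarrow> (real^'d) set" where
  "cube_piece r S = {x \<in> unit_cube. \<forall>i. i \<in> S \<longleftrightarrow> x $ i < r $ i}"

lemma cube_piece_sets[measurable]: "cube_piece r S \<in> sets borel"
  unfolding cube_piece_def unit_cube_def by measurable

lemma sum_indicator_cube_piece:
  "(\<Sum>S\<in>UNIV. indicator (cube_piece r S) x * g S) =
    (indicator unit_cube x * g {i. x $ i < r $ i} :: 'a::semiring_1)"
proof -
  have "(\<Sum>S\<in>UNIV. indicator (cube_piece r S) x * g S) =
      (\<Sum>S\<in>UNIV. if S = {i. x $ i < r $ i} then indicator unit_cube x * g S else 0)"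
    by (intro sum.cong) (auto simp: cube_piece_def indicator_def)
  then show ?thesis by simp
qed

lemma sum_indicator_cube_piece_shifted:
  assumes r: "\<And>i. 0 \<le> r $ i \<and> r $ i < 1"
  shows "(\<Sum>S\<in>UNIV. indicator (cube_piece r S) (y + r - cube_vertex S)) =
    (indicator unit_cube y :: 'a::semiring_1)"
proof -
  have "y + r - cube_vertex S \<in> cube_piece r S \<longleftrightarrow> y \<in> unit_cube \<and> S = {i. 1 - r $ i \<le> y $ i}" for S
  proof -
    have "(0 \<le> y $ i + r $ i - (if i \<in> S then 1 else 0) \<and> y $ i + r $ i - (if i \<in> S then 1 else 0) < 1 \<and>
        (i \<in> S \<longleftrightarrow> y $ i + r $ i - (if i \<in> S then 1 else 0) < r $ i)) \<longleftrightarrow>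
        (0 \<le> y $ i \<and> y $ i < 1 \<and> (i \<in> S \<longleftrightarrow> 1 - r $ i \<le> y $ i))" for i
      using r[of i] by (cases "i \<in> S") auto
    then have "y + r - cube_vertex S \<in> cube_piece r S \<longleftrightarrow>
        (\<forall>i. 0 \<le> y $ i \<and> y $ i < 1 \<and> (i \<in> S \<longleftrightarrow> 1 - r $ i \<le> y $ i))"
      by (simp add: cube_piece_def unit_cube_def cube_vertex_def all_conj_distrib[symmetric])
    then show ?thesis by (auto simp: unit_cube_def)
  qed
  then have "(\<Sum>S\<in>UNIV. indicator (cube_piece r S) (y + r - cube_vertex S)) =
      (\<Sum>S\<in>UNIV. if S = {i. 1 - r $ i \<le> y $ i} then indicator unit_cube y else (0::'a))"
    by (intro sum.cong) (auto simp: indicator_def)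
  then show ?thesis by simp
qed

text \<open>Replace c by its fractional part r. The pieces of the cube on which x - r has a fixed set S of
  negative coordinates, translated by the vertex of S, reassemble the cube.\<close>

lemma nn_integral_unit_cube_periodic_shift:
  fixes p :: "real^'d \<Rightarrow> ennreal"
  assumes [measurable]: "p \<in> borel_measurable borel" and p: "periodic_torus p"
  shows "(\<integral>\<^sup>+x. indicator unit_cube x * p (x - c) \<partial>lborel) = (\<integral>\<^sup>+x. indicator unit_cube x * p x \<partial>lborel)"
proof -
  define r :: "real^'d" where "r = (\<chi> i. frac (c $ i))"
  have r: "0 \<le> r $ i \<and> r $ i < 1" for i
    by (simp add: r_def frac_lt_1)
  have "int_vec (c - r)"
    by (simp add: int_vec_def r_def frac_def)
  then have p_c: "p (x - c) = p (x - r)" for x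
    using p by (metis periodic_torus_def diff_add_cancel diff_diff_eq2)
  have p_vertex: "p (x - r + cube_vertex S) = p (x - r)" for x S
    using p int_vec_cube_vertex unfolding periodic_torus_def by blast
  have "(\<integral>\<^sup>+x. indicator unit_cube x * p (x - c) \<partial>lborel) =
      (\<integral>\<^sup>+x. (\<Sum>S\<in>UNIV. indicator (cube_piece r S) x * p (x - r + cube_vertex S)) \<partial>lborel)"
    by (simp add: sum_indicator_cube_piece p_c p_vertex)
  also have "\<dots> = (\<Sum>S\<in>UNIV. \<integral>\<^sup>+x. indicator (cube_piece r S) x * p (x - r + cube_vertex S) \<partial>lborel)"
    by (intro nn_integral_sum) measurable
  also have "\<dots> = (\<Sum>S\<in>UNIV. \<integral>\<^sup>+y. indicator (cube_piece r S) (y + r - cube_vertex S) * p y \<partial>lborel)"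
    using nn_integral_lborel_translate[of "\<lambda>y. indicator (cube_piece r S) (y + r - cube_vertex S) * p y"
        "cube_vertex S - r" for S]
    by (simp add: algebra_simps)
  also have "\<dots> = (\<integral>\<^sup>+y. (\<Sum>S\<in>UNIV. indicator (cube_piece r S) (y + r - cube_vertex S)) * p y \<partial>lborel)"
    unfolding sum_distrib_right by (intro nn_integral_sum[symmetric]) measurable
  also have "\<dots> = (\<integral>\<^sup>+y. indicator unit_cube y * p y \<partial>lborel)"
    by (simp add: sum_indicator_cube_piece_shifted[OF r])
  finally show ?thesis .
qed

lemma nn_integral_phase_dom_drift:
  fixes h :: "(real^'d) \<times> (real^'d) \<Rightarrow> ennreal"
  assumes [measurable]: "h \<in> borel_measurable borel" and h: "periodic_x h"
  shows "(\<integral>\<^sup>+z. indicator phase_dom z * h (fst z - t *\<^sub>R snd z, snd z) \<partial>lborel) =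
    (\<integral>\<^sup>+z. indicator phase_dom z * h z \<partial>lborel)"
proof -
  have "(\<integral>\<^sup>+x. indicator unit_cube x * h (x - t *\<^sub>R v, v) \<partial>lborel) =
      (\<integral>\<^sup>+x. indicator unit_cube x * h (x, v) \<partial>lborel)" for v :: "real^'d"
    using h by (intro nn_integral_unit_cube_periodic_shift) (auto simp: periodic_x_def periodic_torus_def)
  then show ?thesis
    by (simp add: nn_integral_lborel_snd[of "\<lambda>z. indicator phase_dom z * _ z"] indicator_phase_dom)
qed

lemma nn_integral_phase_dom_kick:
  fixes h :: "(real^'d) \<times> (real^'d) \<Rightarrow> ennreal" and E :: "real^'d \<Rightarrow> real^'d"
  assumes [measurable]: "h \<in> borel_measurable borel" "E \<in> borel_measurable borel"
  shows "(\<integral>\<^sup>+z. indicator phase_dom z * h (fst z, snd z - t *\<^sub>R E (fst z)) \<partial>lborel) =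
    (\<integral>\<^sup>+z. indicator phase_dom z * h z \<partial>lborel)"
proof -
  have "(\<integral>\<^sup>+v. h (x, v - t *\<^sub>R E x) \<partial>lborel) = (\<integral>\<^sup>+v. h (x, v) \<partial>lborel)" for x
    using nn_integral_lborel_translate[of "\<lambda>v. h (x, v)" "- t *\<^sub>R E x"] by simp
  then show ?thesis
    by (simp add: nn_integral_lborel_fst[of "\<lambda>z. indicator phase_dom z * _ z"] indicator_phase_dom
        nn_integral_cmult)
qed

lemma borel_measurable_frac: "(\<lambda>x::real. frac x) \<in> borel_measurable borel"
  unfolding frac_def by (intro borel_measurable_diff borel_measurable_real_floor measurable_ident_sets refl)

lemma borel_measurable_periodic_x:
  fixes f :: "(real^'d) \<times> (real^'d) \<Rightarrow> real"
  assumes f: "periodic_x f" and f_meas: "set_borel_measurable lborel phase_dom f"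
  shows "f \<in> borel_measurable borel"
proof -
  define reduce :: "(real^'d) \<times> (real^'d) \<Rightarrow> (real^'d) \<times> (real^'d)" where
    "reduce z = ((\<chi> i. frac (fst z $ i)), snd z)" for z
  have [measurable]: "reduce \<in> borel_measurable borel"
    unfolding reduce_def
    by (intro borel_measurable_Pair borel_measurable_vec_lambda measurable_compose[OF _ borel_measurable_frac])
      measurable
  have "reduce z \<in> phase_dom" for z
    by (simp add: reduce_def phase_dom_def frac_lt_1)
  moreover have "f (reduce z) = f z" for z
  proof -
    define w where "w = fst z - (\<chi> i. frac (fst z $ i))"
    have "int_vec w"
      by (simp add: w_def int_vec_def frac_def)
    then have "f ((\<chi> i. frac (fst z $ i)) + w, snd z) = f (reduce z)"
      using f by (simp add: periodic_x_def reduce_def)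
    then show ?thesis
      by (simp add: w_def)
  qed
  ultimately have "f = (\<lambda>z. indicator phase_dom (reduce z) *\<^sub>R f (reduce z))"
    by auto
  also have "\<dots> \<in> borel_measurable borel"
    using f_meas unfolding set_borel_measurable_def by measurable
  finally show ?thesis .
qed

section \<open>The splitting map\<close>

definition split_map ::
    "real \<Rightarrow> (real^'d \<Rightarrow> real^'d) \<Rightarrow> (real^'d) \<times> (real^'d) \<Rightarrow> (real^'d) \<times> (real^'d)" where
  "split_map t E z = (fst z - t *\<^sub>R (snd z - t *\<^sub>R E (fst z)), snd z - t *\<^sub>R E (fst z))"

lemma S2_S1_eq_split_map: "S2 t E (S1 t g) z = g (split_map t E z)"
  by (cases z) (simp add: S1_def S2_def split_map_def)

lemma measurable_split_map_pow[measurable]: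
  assumes [measurable]: "E \<in> borel_measurable borel"
  shows "split_map t E ^^ n \<in> borel_measurable borel"
proof -
  have [measurable]: "split_map t E \<in> borel_measurable borel"
    unfolding split_map_def by measurable
  show ?thesis
    by (induction n) (auto simp: measurable_ident)
qed

lemma periodic_x_compose_split_map_pow:
  fixes E :: "real^'d \<Rightarrow> real^'d"
  assumes E: "periodic_torus E" and h: "periodic_x h"
  shows "periodic_x (\<lambda>z. h ((split_map t E ^^ n) z))"
proof (induction n)
  case 0
  then show ?case using h by simp
next
  case (Suc n)
  have "split_map t E (x + z, v) = (fst (split_map t E (x, v)) + z, snd (split_map t E (x, v)))"
    if "int_vec z" for x v z
    using E that by (simp add: split_map_def periodic_torus_def algebra_simps)
  with Suc show ?case
    by (simp add: periodic_x_def funpow_Suc_right del: funpow.simps)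
qed

lemma nn_integral_phase_dom_split_map_pow:
  fixes h :: "(real^'d) \<times> (real^'d) \<Rightarrow> ennreal"
  assumes [measurable]: "h \<in> borel_measurable borel" "E \<in> borel_measurable borel"
    and h: "periodic_x h" and E: "periodic_torus E"
  shows "(\<integral>\<^sup>+z. indicator phase_dom z * h ((split_map t E ^^ n) z) \<partial>lborel) =
    (\<integral>\<^sup>+z. indicator phase_dom z * h z \<partial>lborel)"
proof (induction n)
  case (Suc n)
  let ?h = "\<lambda>z. h ((split_map t E ^^ n) z)"
  have [measurable]: "?h \<in> borel_measurable borel"
    by measurable
  let ?g = "\<lambda>z. ?h (fst z - t *\<^sub>R snd z, snd z)"
  have "(\<integral>\<^sup>+z. indicator phase_dom z * h ((split_map t E ^^ Suc n) z) \<partial>lborel) =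
      (\<integral>\<^sup>+z. indicator phase_dom z * ?g (fst z, snd z - t *\<^sub>R E (fst z)) \<partial>lborel)"
    by (simp only: funpow_Suc_right o_apply split_map_def fst_conv snd_conv)
  also have "\<dots> = (\<integral>\<^sup>+z. indicator phase_dom z * ?g z \<partial>lborel)"
    by (rule nn_integral_phase_dom_kick) measurable
  also have "\<dots> = (\<integral>\<^sup>+z. indicator phase_dom z * ?h z \<partial>lborel)"
    using periodic_x_compose_split_map_pow[OF E h] by (rule nn_integral_phase_dom_drift[rotated]) measurable
  finally show ?case
    using Suc.IH by simp
qed simp

lemma
  fixes g :: "(real^'d) \<times> (real^'d) \<Rightarrow> real" and E :: "real^'d \<Rightarrow> real^'d"
  assumes [measurable]: "g \<in> borel_measurable borel" "E \<in> borel_measurable borel"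
    and g: "periodic_x g" and E: "periodic_torus E" and g_int: "set_integrable lborel phase_dom g"
  shows set_integrable_compose_split_map_pow:
      "set_integrable lborel phase_dom (\<lambda>z. g ((split_map t E ^^ n) z))"
    and set_integral_compose_split_map_pow:
      "(LINT z:phase_dom|lborel. g ((split_map t E ^^ n) z)) = (LINT z:phase_dom|lborel. g z)"
proof -
  have preserved: "(\<integral>\<^sup>+z. ennreal (indicator phase_dom z * f ((split_map t E ^^ n) z)) \<partial>lborel) =
      (\<integral>\<^sup>+z. ennreal (indicator phase_dom z * f z) \<partial>lborel)"
    if [measurable]: "f \<in> borel_measurable borel" and f: "periodic_x f" for f
  proof -
    have "periodic_x (\<lambda>z. ennreal (f z))"
      using f by (simp add: periodic_x_def)
    then show ?thesis
      using nn_integral_phase_dom_split_map_pow[of "\<lambda>z. ennreal (f z)" E n t] E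
      by (simp add: indicator_mult_ennreal)
  qed
  have "periodic_x (\<lambda>z. \<bar>g z\<bar>)" "periodic_x (\<lambda>z. - g z)"
    using g by (simp_all add: periodic_x_def)
  note preserved_abs = preserved[OF _ this(1)] and preserved_neg = preserved[OF _ this(2)]
  have "(\<integral>\<^sup>+z. ennreal (norm (indicator phase_dom z *\<^sub>R g ((split_map t E ^^ n) z))) \<partial>lborel) < \<infinity>"
    using g_int preserved_abs
    by (simp add: set_integrable_def integrable_iff_bounded abs_mult)
  then show int: "set_integrable lborel phase_dom (\<lambda>z. g ((split_map t E ^^ n) z))"
    by (simp add: set_integrable_def integrable_iff_bounded)
  show "(LINT z:phase_dom|lborel. g ((split_map t E ^^ n) z)) = (LINT z:phase_dom|lborel. g z)"
    using int g_int preserved[OF _ g] preserved_neg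
    by (simp add: set_integrable_def set_lebesgue_integral_def real_lebesgue_integral_def)
qed

section \<open>Independent Gaussian increments\<close>

lemma normal_density_mgf:
  fixes s a :: real
  assumes s: "0 < s"
  shows "integrable lborel (\<lambda>x. normal_density 0 s x * exp (a * x))"
    and "(\<integral>x. normal_density 0 s x * exp (a * x) \<partial>lborel) = exp (a\<^sup>2 * s\<^sup>2 / 2)"
proof -
  have "- x\<^sup>2 / (2 * s\<^sup>2) + a * x = a\<^sup>2 * s\<^sup>2 / 2 + (- (x - a * s\<^sup>2)\<^sup>2 / (2 * s\<^sup>2))" for x
    using s by (simp add: field_simps power2_eq_square)
  then have eq: "normal_density 0 s x * exp (a * x) = exp (a\<^sup>2 * s\<^sup>2 / 2) * normal_density (a * s\<^sup>2) s x" for x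
    unfolding normal_density_def by (simp add: exp_add[symmetric])
  show "integrable lborel (\<lambda>x. normal_density 0 s x * exp (a * x))"
    unfolding eq using s by (intro integrable_mult_right integrable_normal_density)
  show "(\<integral>x. normal_density 0 s x * exp (a * x) \<partial>lborel) = exp (a\<^sup>2 * s\<^sup>2 / 2)"
    unfolding eq using s by simp
qed

definition wiener_incr :: "real \<Rightarrow> (nat \<Rightarrow> real \<Rightarrow> 'w \<Rightarrow> real) \<Rightarrow> nat \<Rightarrow> nat \<Rightarrow> 'w \<Rightarrow> real" where
  "wiener_incr t \<beta> j k \<omega> = \<beta> k (real (Suc j) * t) \<omega> - \<beta> k (real j * t) \<omega>"

context
  fixes M :: "'w measure" and K :: nat and \<beta> :: "nat \<Rightarrow> real \<Rightarrow> 'w \<Rightarrow> real" and t :: real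
  assumes W: "indep_wiener M K \<beta>" and t: "0 < t"
begin

lemma indep_wiener_prob_space: "prob_space M"
  using W by (simp add: indep_wiener_def)

lemma measurable_wiener_incr:
  assumes "k < K"
  shows "wiener_incr t \<beta> j k \<in> borel_measurable M"
  using W assms t unfolding indep_wiener_def wiener_incr_def[abs_def]
  by (intro borel_measurable_diff) auto

lemma indep_wiener_increments:
  "prob_space.indep_vars M (\<lambda>_. borel) (\<lambda>(k, j). wiener_incr t \<beta> j k) ({..<K} \<times> {..<n}) \<and>
    (\<forall>k<K. \<forall>j<n. distributed M lborel (wiener_incr t \<beta> j k)
      (\<lambda>y. ennreal (normal_density 0 (sqrt t) y)))"
proof -
  have "0 \<le> real 0 * t" "\<And>i. i < n \<Longrightarrow> real i * t < real (Suc i) * t"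
    using t by auto
  from W[unfolded indep_wiener_def, THEN conjunct2, THEN conjunct2, THEN conjunct2, THEN conjunct2,
      rule_format, of "\<lambda>i. real i * t" n, OF this]
  show ?thesis
    by (simp add: wiener_incr_def[abs_def] case_prod_beta' algebra_simps)
qed

lemma indep_vars_wiener_incr:
  "prob_space.indep_vars M (\<lambda>_. borel) (\<lambda>(k, j). wiener_incr t \<beta> j k) ({..<K} \<times> {..<n})"
  using indep_wiener_increments by blast

lemma distributed_wiener_incr:
  assumes "k < K"
  shows "distributed M lborel (wiener_incr t \<beta> j k) (\<lambda>y. ennreal (normal_density 0 (sqrt t) y))"
  using indep_wiener_increments[of "Suc j"] assms by simp

lemma
  assumes "k < K"
  shows integrable_exp_wiener_incr: "integrable M (\<lambda>\<omega>. exp (a * wiener_incr t \<beta> j k \<omega>))"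
    and expectation_exp_wiener_incr: "(\<integral>\<omega>. exp (a * wiener_incr t \<beta> j k \<omega>) \<partial>M) = exp (a\<^sup>2 * t / 2)"
proof -
  note distr = distributed_wiener_incr[OF assms, of j]
  have st: "0 < sqrt t"
    using t by simp
  show "integrable M (\<lambda>\<omega>. exp (a * wiener_incr t \<beta> j k \<omega>))"
    using distributed_integrable[OF distr, of "\<lambda>x. exp (a * x)"] normal_density_mgf(1)[OF st] by simp
  show "(\<integral>\<omega>. exp (a * wiener_incr t \<beta> j k \<omega>) \<partial>M) = exp (a\<^sup>2 * t / 2)"
    using distributed_integral[OF distr, of "\<lambda>x. exp (a * x)"] normal_density_mgf(2)[OF st] t by simp
qed

lemma
  fixes a :: "nat \<Rightarrow> nat \<Rightarrow> real"
  shows integrable_exp_sum_wiener_incr: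
      "integrable M (\<lambda>\<omega>. exp (\<Sum>j<n. \<Sum>k<K. a j k * wiener_incr t \<beta> j k \<omega>))"
    and expectation_exp_sum_wiener_incr:
      "(\<integral>\<omega>. exp (\<Sum>j<n. \<Sum>k<K. a j k * wiener_incr t \<beta> j k \<omega>) \<partial>M) =
        exp (t / 2 * (\<Sum>j<n. \<Sum>k<K. (a j k)\<^sup>2))"
proof -
  interpret prob_space M
    by (rule indep_wiener_prob_space)
  let ?I = "{..<K} \<times> {..<n}"
  define X where "X = (\<lambda>(k, j) \<omega>. exp (a j k * wiener_incr t \<beta> j k \<omega>))"
  have prod_X: "exp (\<Sum>j<n. \<Sum>k<K. a j k * wiener_incr t \<beta> j k \<omega>) = (\<Prod>p\<in>?I. X p \<omega>)" for \<omega>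
    by (subst sum.swap) (simp add: X_def exp_sum sum.cartesian_product case_prod_beta)
  have "indep_vars (\<lambda>_. borel) (\<lambda>p \<omega>. exp (a (snd p) (fst p) * (case p of (k, j) \<Rightarrow> wiener_incr t \<beta> j k) \<omega>)) ?I"
    by (rule indep_vars_compose2[OF indep_vars_wiener_incr]) measurable
  then have indep: "indep_vars (\<lambda>_. borel) X ?I"
    by (simp add: X_def case_prod_beta')
  have int: "integrable M (X p)" if "p \<in> ?I" for p
    using that integrable_exp_wiener_incr by (auto simp: X_def)
  show "integrable M (\<lambda>\<omega>. exp (\<Sum>j<n. \<Sum>k<K. a j k * wiener_incr t \<beta> j k \<omega>))"
    unfolding prod_X using indep int by (intro indep_vars_integrable) auto
  have "(\<integral>\<omega>. (\<Prod>p\<in>?I. X p \<omega>) \<partial>M) = (\<Prod>p\<in>?I. exp ((a (snd p) (fst p))\<^sup>2 * t / 2))"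
    using indep int by (subst indep_vars_lebesgue_integral) (auto intro!: prod.cong simp: X_def expectation_exp_wiener_incr)
  also have "\<dots> = exp (t / 2 * (\<Sum>j<n. \<Sum>k<K. (a j k)\<^sup>2))"
    by (subst sum.swap) (simp add: exp_sum sum.cartesian_product case_prod_beta sum_distrib_left mult_ac)
  finally show "(\<integral>\<omega>. exp (\<Sum>j<n. \<Sum>k<K. a j k * wiener_incr t \<beta> j k \<omega>) \<partial>M) =
      exp (t / 2 * (\<Sum>j<n. \<Sum>k<K. (a j k)\<^sup>2))"
    unfolding prod_X .
qed

end

section \<open>The modified integrator\<close>

definition noise_exponent ::
    "real \<Rightarrow> nat \<Rightarrow> (nat \<Rightarrow> 'z \<Rightarrow> real) \<Rightarrow> (nat \<Rightarrow> real \<Rightarrow> 'w \<Rightarrow> real) \<Rightarrow>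
      nat \<Rightarrow> 'z \<Rightarrow> 'w \<Rightarrow> real" where
  "noise_exponent t K \<sigma> \<beta> j y \<omega> =
    (\<Sum>k<K. \<sigma> k y * wiener_incr t \<beta> j k \<omega>) - t / 2 * (\<Sum>k<K. (\<sigma> k y)\<^sup>2)"

lemma fmI_closed_form:
  "fmI t E K \<sigma> \<beta> f0 n \<omega> z = f0 ((split_map t E ^^ n) z) *
    (\<Prod>j<n. exp (noise_exponent t K \<sigma> \<beta> j ((split_map t E ^^ (n - Suc j)) z) \<omega>))"
proof (induction n arbitrary: z)
  case (Suc n)
  have "(\<Prod>j<n. exp (noise_exponent t K \<sigma> \<beta> j ((split_map t E ^^ (n - Suc j)) (split_map t E z)) \<omega>)) =
      (\<Prod>j<n. exp (noise_exponent t K \<sigma> \<beta> j ((split_map t E ^^ (Suc n - Suc j)) z) \<omega>))"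
  proof (intro prod.cong refl)
    fix j assume "j \<in> {..<n}"
    then have "Suc n - Suc j = Suc (n - Suc j)"
      by simp
    then show "exp (noise_exponent t K \<sigma> \<beta> j ((split_map t E ^^ (n - Suc j)) (split_map t E z)) \<omega>) =
        exp (noise_exponent t K \<sigma> \<beta> j ((split_map t E ^^ (Suc n - Suc j)) z) \<omega>)"
      by (simp only: funpow_Suc_right o_apply)
  qed
  then show ?case
    by (simp add: Suc S2_S1_eq_split_map noise_exponent_def wiener_incr_def lessThan_Suc
        funpow_Suc_right del: funpow.simps)
qed simp

lemma fmI_nonneg:
  assumes "\<And>z. 0 \<le> f0 z"
  shows "0 \<le> fmI t E K \<sigma> \<beta> f0 n \<omega> z"
  unfolding fmI_closed_form using assms by (simp add: prod_nonneg)

lemma noise_exponent_le: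
  assumes B: "\<And>k. k < K \<Longrightarrow> \<bar>\<sigma> k y\<bar> \<le> B k" and t: "0 \<le> t"
  shows "noise_exponent t K \<sigma> \<beta> j y \<omega> \<le> (\<Sum>k<K. B k * \<bar>wiener_incr t \<beta> j k \<omega>\<bar>)"
proof -
  have "noise_exponent t K \<sigma> \<beta> j y \<omega> \<le> (\<Sum>k<K. \<sigma> k y * wiener_incr t \<beta> j k \<omega>)"
    unfolding noise_exponent_def using t by (simp add: sum_nonneg)
  also have "\<dots> \<le> (\<Sum>k<K. B k * \<bar>wiener_incr t \<beta> j k \<omega>\<bar>)"
  proof (rule sum_mono)
    fix k assume "k \<in> {..<K}"
    have "\<sigma> k y * wiener_incr t \<beta> j k \<omega> \<le> \<bar>\<sigma> k y\<bar> * \<bar>wiener_incr t \<beta> j k \<omega>\<bar>"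
      by (metis abs_ge_self abs_mult)
    also have "\<dots> \<le> B k * \<bar>wiener_incr t \<beta> j k \<omega>\<bar>"
      using B \<open>k \<in> {..<K}\<close> by (intro mult_right_mono) auto
    finally show "\<sigma> k y * wiener_incr t \<beta> j k \<omega> \<le> B k * \<bar>wiener_incr t \<beta> j k \<omega>\<bar>" .
  qed
  finally show ?thesis .
qed

lemma power_prod_exp_noise_exponent:
  "(\<Prod>j<n. exp (noise_exponent t K \<sigma> \<beta> j (y j) \<omega>)) ^ m =
    exp (\<Sum>j<n. \<Sum>k<K. (real m * \<sigma> k (y j)) * wiener_incr t \<beta> j k \<omega>) *
    exp (- (real m * t / 2 * (\<Sum>j<n. \<Sum>k<K. (\<sigma> k (y j))\<^sup>2)))"
  by (simp add: noise_exponent_def exp_sum[symmetric] exp_of_nat_mult[symmetric] exp_add[symmetric]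
      sum_distrib_left sum_subtractf algebra_simps)

context
  fixes M :: "'w measure" and K :: nat and \<beta> :: "nat \<Rightarrow> real \<Rightarrow> 'w \<Rightarrow> real" and t :: real
  assumes W: "indep_wiener M K \<beta>" and t: "0 < t"
begin

lemma
  fixes \<sigma> :: "nat \<Rightarrow> 'z \<Rightarrow> real" and y :: "nat \<Rightarrow> 'z"
  shows integrable_power_prod_exp_noise_exponent:
      "integrable M (\<lambda>\<omega>. (\<Prod>j<n. exp (noise_exponent t K \<sigma> \<beta> j (y j) \<omega>)) ^ m)"
    and expectation_power_prod_exp_noise_exponent:
      "(\<integral>\<omega>. (\<Prod>j<n. exp (noise_exponent t K \<sigma> \<beta> j (y j) \<omega>)) ^ m \<partial>M) =
        exp ((real m ^ 2 - real m) * t / 2 * (\<Sum>j<n. \<Sum>k<K. (\<sigma> k (y j))\<^sup>2))"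
proof -
  let ?S = "\<Sum>j<n. \<Sum>k<K. (\<sigma> k (y j))\<^sup>2"
  show "integrable M (\<lambda>\<omega>. (\<Prod>j<n. exp (noise_exponent t K \<sigma> \<beta> j (y j) \<omega>)) ^ m)"
    unfolding power_prod_exp_noise_exponent by (intro integrable_mult_left integrable_exp_sum_wiener_incr[OF W t])
  have "(\<Sum>j<n. \<Sum>k<K. (real m * \<sigma> k (y j))\<^sup>2) = real m ^ 2 * ?S"
    by (simp add: power_mult_distrib sum_distrib_left)
  then show "(\<integral>\<omega>. (\<Prod>j<n. exp (noise_exponent t K \<sigma> \<beta> j (y j) \<omega>)) ^ m \<partial>M) =
      exp ((real m ^ 2 - real m) * t / 2 * ?S)"
    unfolding power_prod_exp_noise_exponent integral_mult_left_zero expectation_exp_sum_wiener_incr[OF W t]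
    by (simp add: exp_add[symmetric] algebra_simps)
qed

lemma expectation_fmI:
  fixes \<sigma> :: "nat \<Rightarrow> (real^'d) \<times> (real^'d) \<Rightarrow> real"
  shows "(\<integral>\<omega>. fmI t E K \<sigma> \<beta> f0 n \<omega> z \<partial>M) = f0 ((split_map t E ^^ n) z)"
  using integrable_power_prod_exp_noise_exponent[where m=1 and y="\<lambda>j. (split_map t E ^^ (n - Suc j)) z"]
    expectation_power_prod_exp_noise_exponent[where m=1 and y="\<lambda>j. (split_map t E ^^ (n - Suc j)) z"]
  by (simp add: fmI_closed_form)

lemma
  fixes \<sigma> :: "nat \<Rightarrow> (real^'d) \<times> (real^'d) \<Rightarrow> real"
  assumes s: "\<And>z. (\<Sum>k<K. (\<sigma> k z)\<^sup>2) = s\<^sup>2"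
  shows integrable_fmI_squared: "integrable M (\<lambda>\<omega>. (fmI t E K \<sigma> \<beta> f0 n \<omega> z)\<^sup>2)"
    and expectation_fmI_squared: "(\<integral>\<omega>. (fmI t E K \<sigma> \<beta> f0 n \<omega> z)\<^sup>2 \<partial>M) =
      exp (s\<^sup>2 * (real n * t)) * (f0 ((split_map t E ^^ n) z))\<^sup>2"
  using integrable_power_prod_exp_noise_exponent[where m=2 and y="\<lambda>j. (split_map t E ^^ (n - Suc j)) z"]
    expectation_power_prod_exp_noise_exponent[where m=2 and y="\<lambda>j. (split_map t E ^^ (n - Suc j)) z"]
  by (simp_all add: fmI_closed_form power_mult_distrib s algebra_simps)

context
  fixes E :: "real^'d \<Rightarrow> real^'d" and \<sigma> :: "nat \<Rightarrow> (real^'d) \<times> (real^'d) \<Rightarrow> real"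
    and f0 :: "(real^'d) \<times> (real^'d) \<Rightarrow> real"
  assumes E_meas[measurable]: "E \<in> borel_measurable borel"
    and \<sigma>_meas: "\<And>k. k < K \<Longrightarrow> \<sigma> k \<in> borel_measurable borel"
    and f0_meas[measurable]: "f0 \<in> borel_measurable borel"
begin

lemma measurable_fmI:
  assumes g: "g \<in> N \<rightarrow>\<^sub>M borel" and h: "h \<in> N \<rightarrow>\<^sub>M M"
  shows "(\<lambda>x. fmI t E K \<sigma> \<beta> f0 n (h x) (g x)) \<in> borel_measurable N"
proof -
  have "(\<lambda>x. noise_exponent t K \<sigma> \<beta> j (g' x) (h x)) \<in> borel_measurable N"
    if g': "g' \<in> N \<rightarrow>\<^sub>M borel" for g' j
    unfolding noise_exponent_def
    using measurable_compose[OF g' \<sigma>_meas] measurable_compose[OF h measurable_wiener_incr[OF W t]]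
    by (intro borel_measurable_diff borel_measurable_times borel_measurable_sum borel_measurable_power
        borel_measurable_const) auto
  with g show ?thesis
    unfolding fmI_closed_form by measurable
qed

lemma measurable_pair_fmI:
  "(\<lambda>(\<omega>, z). fmI t E K \<sigma> \<beta> f0 n \<omega> z) \<in> borel_measurable (M \<Otimes>\<^sub>M lborel)"
  using measurable_fmI[of snd "M \<Otimes>\<^sub>M lborel" fst n] by (simp add: case_prod_beta')

lemma set_integrable_fmI:
  assumes E: "periodic_torus E" and f0: "periodic_x f0"
    and \<sigma>_bdd: "\<And>k. k < K \<Longrightarrow> bounded (range (\<sigma> k))"
    and f0_int: "set_integrable lborel phase_dom f0" and \<omega>: "\<omega> \<in> space M"
  shows "set_integrable lborel phase_dom (fmI t E K \<sigma> \<beta> f0 n \<omega>)"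
proof -
  have "\<forall>k\<in>{..<K}. \<exists>b. \<forall>z. \<bar>\<sigma> k z\<bar> \<le> b"
    using \<sigma>_bdd by (auto simp: bounded_real)
  from bchoice[OF this] obtain B where "\<forall>k\<in>{..<K}. \<forall>z. \<bar>\<sigma> k z\<bar> \<le> B k" ..
  then have B: "\<And>k z. k < K \<Longrightarrow> \<bar>\<sigma> k z\<bar> \<le> B k"
    by blast
  define C where "C = (\<Prod>j<n. exp (\<Sum>k<K. B k * \<bar>wiener_incr t \<beta> j k \<omega>\<bar>))"
  have bound: "\<bar>fmI t E K \<sigma> \<beta> f0 n \<omega> z\<bar> \<le> \<bar>C * f0 ((split_map t E ^^ n) z)\<bar>" for z
  proof -
    have "(\<Prod>j<n. exp (noise_exponent t K \<sigma> \<beta> j ((split_map t E ^^ (n - Suc j)) z) \<omega>)) \<le> C"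
      unfolding C_def using noise_exponent_le[where K=K and \<sigma>=\<sigma> and B=B, OF B less_imp_le[OF t]]
      by (intro prod_mono) simp
    then show ?thesis
      unfolding fmI_closed_form abs_mult
      by (simp add: prod_nonneg mult.commute mult_left_mono C_def)
  qed
  have meas: "set_borel_measurable lborel phase_dom (fmI t E K \<sigma> \<beta> f0 n \<omega>)"
    unfolding set_borel_measurable_def
    using measurable_fmI[of "\<lambda>z. z" lborel "\<lambda>_. \<omega>" n] \<omega> by simp
  have int: "set_integrable lborel phase_dom (\<lambda>z. C * f0 ((split_map t E ^^ n) z))"
    using set_integrable_compose_split_map_pow[OF f0_meas E_meas f0 E f0_int] by (rule set_integrable_mult_right)
  show ?thesis
    by (rule set_integrable_bound[OF int meas]) (simp add: bound)
qed

lemma set_integral_expectation_fmI: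
  assumes E: "periodic_torus E" and f0: "periodic_x f0" and f0_int: "set_integrable lborel phase_dom f0"
  shows "(LINT z:phase_dom|lborel. (\<integral>\<omega>. fmI t E K \<sigma> \<beta> f0 n \<omega> z \<partial>M)) = (LINT z:phase_dom|lborel. f0 z)"
  unfolding expectation_fmI using f0_meas E_meas f0 E f0_int by (rule set_integral_compose_split_map_pow)

lemma
  assumes E: "periodic_torus E" and f0: "periodic_x f0"
    and s: "\<And>z. (\<Sum>k<K. (\<sigma> k z)\<^sup>2) = s\<^sup>2" and f0_L2: "set_integrable lborel phase_dom (\<lambda>z. (f0 z)\<^sup>2)"
  shows integrable_pair_fmI_squared:
      "integrable (M \<Otimes>\<^sub>M lborel) (\<lambda>(\<omega>, z). indicator phase_dom z * (fmI t E K \<sigma> \<beta> f0 n \<omega> z)\<^sup>2)"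
    and expectation_L2_norm_fmI:
      "(\<integral>\<omega>. (LINT z:phase_dom|lborel. (fmI t E K \<sigma> \<beta> f0 n \<omega> z)\<^sup>2) \<partial>M) =
        exp (s\<^sup>2 * (real n * t)) * (LINT z:phase_dom|lborel. (f0 z)\<^sup>2)"
proof -
  interpret prob_space M
    by (rule indep_wiener_prob_space[OF W t])
  interpret pair_sigma_finite M lborel ..
  let ?F = "\<lambda>(\<omega>, z). indicator phase_dom z * (fmI t E K \<sigma> \<beta> f0 n \<omega> z)\<^sup>2"
  define e where "e = exp (s\<^sup>2 * (real n * t))"
  have F_meas: "?F \<in> borel_measurable (M \<Otimes>\<^sub>M lborel)"
    using measurable_pair_fmI unfolding case_prod_beta' by measurable
  have f0_sq_meas: "(\<lambda>z. (f0 z)\<^sup>2) \<in> borel_measurable borel" and f0_sq: "periodic_x (\<lambda>z. (f0 z)\<^sup>2)"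
    using f0 by (auto simp: periodic_x_def)
  note f0_sq_shift = set_integrable_compose_split_map_pow[OF f0_sq_meas E_meas f0_sq E f0_L2]
    set_integral_compose_split_map_pow[OF f0_sq_meas E_meas f0_sq E f0_L2]
  have "(\<integral>\<^sup>+\<omega>. ennreal (?F (\<omega>, z)) \<partial>M) =
      ennreal (e * (indicator phase_dom z * (f0 ((split_map t E ^^ n) z))\<^sup>2))" for z
    using integrable_fmI_squared[where \<sigma>=\<sigma> and z=z, OF s]
      expectation_fmI_squared[where \<sigma>=\<sigma> and z=z, OF s]
    by (subst nn_integral_eq_integral) (auto simp: e_def)
  then have "(\<integral>\<^sup>+x. ennreal (?F x) \<partial>(M \<Otimes>\<^sub>M lborel)) =
      (\<integral>\<^sup>+z. ennreal (e * (indicator phase_dom z * (f0 ((split_map t E ^^ n) z))\<^sup>2)) \<partial>lborel)"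
    using F_meas by (simp add: nn_integral_snd[symmetric])
  also have "\<dots> = ennreal (e * (LINT z:phase_dom|lborel. (f0 z)\<^sup>2))"
    using f0_sq_shift unfolding set_integrable_def set_lebesgue_integral_def
    by (subst nn_integral_eq_integral) (auto simp: e_def)
  finally have "integrable (M \<Otimes>\<^sub>M lborel) ?F \<and>
      integral\<^sup>L (M \<Otimes>\<^sub>M lborel) ?F = e * (LINT z:phase_dom|lborel. (f0 z)\<^sup>2)"
    using F_meas f0_L2
    by (subst nn_integral_eq_integrable[symmetric]) (auto simp: e_def set_integrable_def set_lebesgue_integral_def)
  then show "integrable (M \<Otimes>\<^sub>M lborel) ?F"
    and "(\<integral>\<omega>. (LINT z:phase_dom|lborel. (fmI t E K \<sigma> \<beta> f0 n \<omega> z)\<^sup>2) \<partial>M) =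
      exp (s\<^sup>2 * (real n * t)) * (LINT z:phase_dom|lborel. (f0 z)\<^sup>2)"
    using integral_fst'[of ?F] by (simp_all add: e_def set_lebesgue_integral_def)
qed

end

end

lemma smooth_map_continuous: "smooth_map f \<Longrightarrow> continuous_on UNIV f"
  unfolding smooth_map_def
  by (auto intro!: continuous_at_imp_continuous_on dest: has_derivative_continuous)

theorem proposition5p2:
  fixes M :: "'w measure" and K :: nat and \<beta> :: "nat \<Rightarrow> real \<Rightarrow> 'w \<Rightarrow> real"
    and E :: "real^'d \<Rightarrow> real^'d" and \<sigma> :: "nat \<Rightarrow> (real^'d) \<times> (real^'d) \<Rightarrow> real"
    and f0 :: "(real^'d) \<times> (real^'d) \<Rightarrow> real" and \<tau> :: real
  assumes W: "indep_wiener M K \<beta>"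
    and E_per: "periodic_torus E" and E_smooth: "smooth_map E"
    and \<sigma>_per: "\<And>k. k < K \<Longrightarrow> periodic_x (\<sigma> k)"
    and \<sigma>_bdd: "\<And>k. k < K \<Longrightarrow> bounded (range (\<sigma> k))"
    and \<sigma>_smooth: "\<And>k. k < K \<Longrightarrow> smooth_map (\<sigma> k)"
    and f0_per: "periodic_x f0"
    and \<tau>: "0 < \<tau>" "\<tau> < 1"
  shows
    "((\<forall>z. 0 \<le> f0 z) \<longrightarrow>
        (AE \<omega> in M. \<forall>n z. 0 \<le> fmI \<tau> E K \<sigma> \<beta> f0 n \<omega> z))
     \<and> (set_integrable lborel phase_dom f0 \<longrightarrow>
        (AE \<omega> in M. \<forall>n. set_integrable lborel phase_dom (fmI \<tau> E K \<sigma> \<beta> f0 n \<omega>)) \<and>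
        (\<forall>n. (LINT z:phase_dom|lborel. integral\<^sup>L M (\<lambda>\<omega>. fmI \<tau> E K \<sigma> \<beta> f0 n \<omega> z))
             = (LINT z:phase_dom|lborel. f0 z)))
     \<and> (\<forall>s::real. (set_integrable lborel phase_dom (\<lambda>z. (f0 z)\<^sup>2) \<and> set_borel_measurable lborel phase_dom f0
          \<and> (\<forall>z. (\<Sum>k<K. (\<sigma> k z)\<^sup>2) = s\<^sup>2)) \<longrightarrow>
        (\<forall>n. integrable (M \<Otimes>\<^sub>M lborel)
               (\<lambda>(\<omega>, z). indicator phase_dom z * (fmI \<tau> E K \<sigma> \<beta> f0 n \<omega> z)\<^sup>2) \<and>
             (\<lambda>(\<omega>, z). indicator phase_dom z * fmI \<tau> E K \<sigma> \<beta> f0 n \<omega> z) \<in> borel_measurable (M \<Otimes>\<^sub>M lborel) \<and>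
             integral\<^sup>L M (\<lambda>\<omega>. LINT z:phase_dom|lborel. (fmI \<tau> E K \<sigma> \<beta> f0 n \<omega> z)\<^sup>2)
               = exp (s\<^sup>2 * (real n * \<tau>)) * (LINT z:phase_dom|lborel. (f0 z)\<^sup>2)))"
proof -
  \<comment> \<open>Smoothness is only used through continuity, i.e. measurability.\<close>
  have E_meas: "E \<in> borel_measurable borel"
    using smooth_map_continuous[OF E_smooth] by (rule borel_measurable_continuous_onI)
  have \<sigma>_meas: "\<sigma> k \<in> borel_measurable borel" if "k < K" for k
    using smooth_map_continuous[OF \<sigma>_smooth[OF that]] by (rule borel_measurable_continuous_onI)
  have f0_meas: "f0 \<in> borel_measurable borel" if "set_borel_measurable lborel phase_dom f0"
    using f0_per that by (rule borel_measurable_periodic_x)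
  have f0_int_meas: "set_borel_measurable lborel phase_dom f0" if "set_integrable lborel phase_dom f0"
    using that unfolding set_integrable_def set_borel_measurable_def by (rule borel_measurable_integrable)
  note scheme = W \<tau>(1) E_meas \<sigma>_meas
  have "(\<lambda>(\<omega>, z). indicator phase_dom z * fmI \<tau> E K \<sigma> \<beta> f0 n \<omega> z) \<in> borel_measurable (M \<Otimes>\<^sub>M lborel)"
    if "set_borel_measurable lborel phase_dom f0" for n
    using measurable_pair_fmI[where \<sigma>=\<sigma>, OF scheme f0_meas[OF that]]
    unfolding case_prod_beta' by measurable
  then show ?thesis
    using fmI_nonneg[of f0] f0_int_meas
      set_integrable_fmI[where \<sigma>=\<sigma>, OF scheme f0_meas E_per f0_per \<sigma>_bdd]
      set_integral_expectation_fmI[where \<sigma>=\<sigma>, OF scheme f0_meas E_per f0_per]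
      integrable_pair_fmI_squared[where \<sigma>=\<sigma>, OF scheme f0_meas E_per f0_per]
      expectation_L2_norm_fmI[where \<sigma>=\<sigma>, OF scheme f0_meas E_per f0_per]
    by (auto intro!: AE_I2 simp del: split_paired_All)
qed

end
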